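(* Let $k\ge1$ and consider the exponential mixture density on $(0,\infty)$ $$f(x\mid\lambda,\boldsymbol\gamma,\mathbf p)=\sum_{i=1}^k\frac{p_i}{\lambda_i}e^{-x/\lambda_i},\qquad\lambda_i=\frac{\lambda\gamma_i}{p_i},$$ where $\lambda>0$, $p_i>0$ with $\sum_ip_i=1$, and $\gamma_i>0$ with $\sum_i\gamma_i=1$ (so that $\lambda$ is the mean of the mixture). Put the prior $\lambda^{-1}\,\mathrm d\lambda\times\pi_0(\mathrm d(\boldsymbol\gamma,\mathbf p))$ where $\pi_0$ is any proper probability distribution on $(\boldsymbol\gamma,\mathbf p)$. Then for any sample $x_1,\dots,x_n>0$ with $n\ge1$, the posterior distribution is proper, i.e. $0<\int\prod_{j=1}^n f(x_j\mid\lambda,\boldsymbol\gamma,\mathbf p)\,\lambda^{-1}\mathrm d\lambda\,\pi_0(\mathrm d(\boldsymbol\gamma,\mathbf p))<\infty$.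
   Context: A posterior is proper when likelihood times prior has finite positive total integral over the parameter space. *)

theory Defs
  imports "HOL-Probability.Probability"
begin

definition comp_scale :: "real \<Rightarrow> real^'k \<Rightarrow> real^'k \<Rightarrow> 'k \<Rightarrow> real" where
  "comp_scale l g p i = l * g$i / p$i"

definition mix_density :: "real \<Rightarrow> real^'k \<Rightarrow> real^'k \<Rightarrow> real \<Rightarrow> real" where
  "mix_density l g p x =
     (\<Sum>i\<in>UNIV. p$i / comp_scale l g p i * exp (- x / comp_scale l g p i))"

definition prob_simplex :: "(real^'k) set" where
  "prob_simplex = {v. (\<forall>i. v$i > 0) \<and> (\<Sum>i\<in>UNIV. v$i) = 1}"

end

theory Submission
  imports Defs
begin

text \<open>
  Expanding the product of the n mixture densities gives a sum over all assignments s of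
  observations to components. Put sigma_s = \<Sum>_j x_j p_(s j) / \<gamma>_(s j). Since p_i \<le> 1 and
  each summand of sigma_s is at most sigma_s, every term of the expansion, divided by \<lambda>, is
  bounded by (sigma_s/\<lambda>)^n exp(-sigma_s/\<lambda>) / (\<lambda> \<Prod>_j x_j). This inverse-gamma kernel has an
  integral over \<lambda> that does not depend on sigma_s and is finite for n \<ge> 1, so the bound is
  uniform in (\<gamma>, p) and survives integration against the probability measure \<pi>0.
  Positivity holds because the integrand is positive for every \<lambda> > 0.
\<close>

lemma power_div_fact_le_exp:
  fixes y :: real
  assumes "y \<ge> 0"
  shows "y ^ m / fact m \<le> exp y"
proof -
  have exp_split: "exp y = (\<Sum>n<Suc m. inverse (fact n) *\<^sub>R y ^ n)
      + (\<Sum>n. inverse (fact (n + Suc m)) *\<^sub>R y ^ (n + Suc m))"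
    by (rule exp_first_terms)
  have "summable (\<lambda>n. inverse (fact (n + Suc m)) *\<^sub>R y ^ (n + Suc m))"
    using summable_ignore_initial_segment[OF summable_exp_generic[of y], of "Suc m"] by simp
  then have tail_nonneg: "0 \<le> (\<Sum>n. inverse (fact (n + Suc m)) *\<^sub>R y ^ (n + Suc m))"
    by (rule suminf_nonneg) (use assms in simp)
  have "y ^ m / fact m \<le> (\<Sum>n<Suc m. inverse (fact n) *\<^sub>R y ^ n)"
    using member_le_sum[of m "{..<Suc m}" "\<lambda>n. inverse (fact n) *\<^sub>R y ^ n"] assms
    by (simp add: divide_inverse mult.commute)
  then show ?thesis
    using exp_split tail_nonneg by linarith
qed

definition inv_gamma_kernel :: "nat \<Rightarrow> real \<Rightarrow> real \<Rightarrow> ennreal" where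
  "inv_gamma_kernel n \<sigma> t = ennreal ((\<sigma> / t) ^ n * exp (- \<sigma> / t) / t) * indicator {0<..} t"

lemma inv_gamma_kernel_measurable [measurable]: "inv_gamma_kernel n \<sigma> \<in> borel_measurable borel"
  unfolding inv_gamma_kernel_def by measurable

lemma inv_gamma_kernel_le:
  assumes "n \<ge> 1"
  shows "inv_gamma_kernel n 1 t
    \<le> ennreal (fact (Suc n)) * indicator {0..1} t + ennreal (t powr -2) * indicator {1..} t"
proof (cases "t > 0")
  case False
  then show ?thesis by (simp add: inv_gamma_kernel_def)
next
  case t: True
  have kernel_eq: "(1 / t) ^ n * exp (- 1 / t) / t = (1 / t) ^ Suc n / exp (1 / t)"
    using t by (simp add: exp_minus field_simps)
  show ?thesis
  proof (cases "t \<le> 1")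
    case True
    have "(1 / t) ^ Suc n / fact (Suc n) \<le> exp (1 / t)"
      using t by (intro power_div_fact_le_exp) simp
    then have "(1 / t) ^ Suc n / exp (1 / t) \<le> fact (Suc n)"
      by (simp only: pos_divide_le_eq[OF fact_gt_zero] pos_divide_le_eq[OF exp_gt_zero] mult.commute)
    then have "ennreal ((1 / t) ^ n * exp (- 1 / t) / t) \<le> ennreal (fact (Suc n))"
      using kernel_eq by (intro ennreal_leI) simp
    then show ?thesis
      using True t unfolding inv_gamma_kernel_def
      by (auto intro: add_increasing2 simp del: fact_Suc)
  next
    case False
    have "(1 / t) ^ Suc n \<le> (1 / t) ^ 2"
      using False assms by (intro power_decreasing) auto
    moreover have "(1 / t) ^ Suc n / exp (1 / t) \<le> (1 / t) ^ Suc n"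
      using t by (simp add: divide_le_eq)
    moreover have "(1 / t) ^ 2 = t powr -2"
      using t by (simp add: powr_minus powr_realpow divide_inverse power_inverse)
    ultimately have "(1 / t) ^ n * exp (- 1 / t) / t \<le> t powr -2"
      using kernel_eq by linarith
    then show ?thesis
      using False by (simp add: inv_gamma_kernel_def)
  qed
qed

lemma nn_integral_inv_gamma_kernel_finite:
  assumes "n \<ge> 1"
  shows "(\<integral>\<^sup>+t. inv_gamma_kernel n 1 t \<partial>lborel) < \<infinity>"
proof -
  have tail: "(\<integral>\<^sup>+t. ennreal (t powr -2) * indicator {1..} t \<partial>lborel) = 1"
  proof -
    have "(\<integral>\<^sup>+t. ennreal (t powr -2) * indicator {1..} t \<partial>lborel)
        = (\<integral>\<^sup>+t. ennreal (indicator {1..} t * t powr -2) \<partial>lborel)"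
      by (intro nn_integral_cong) (auto split: split_indicator)
    also have "\<dots> = ennreal (- (1 powr (-2 + 1)) / (-2 + 1))"
      by (rule nn_integral_has_integral_lebesgue[OF _ has_integral_powr_to_inf]) auto
    finally show ?thesis by simp
  qed
  have "(\<integral>\<^sup>+t. inv_gamma_kernel n 1 t \<partial>lborel)
      \<le> (\<integral>\<^sup>+t. ennreal (fact (Suc n)) * indicator {0..1} t
                + ennreal (t powr -2) * indicator {1..} t \<partial>lborel)"
    by (intro nn_integral_mono inv_gamma_kernel_le assms)
  also have "\<dots> = ennreal (fact (Suc n)) * emeasure lborel {0::real..1}
      + (\<integral>\<^sup>+t. ennreal (t powr -2) * indicator {1..} t \<partial>lborel)"
    by (simp add: nn_integral_add nn_integral_cmult_indicator)
  also have "\<dots> = ennreal (fact (Suc n) + 1)"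
    by (simp add: tail ennreal_plus del: fact_Suc)
  finally show ?thesis
    by (rule le_less_trans) simp
qed

lemma nn_integral_inv_gamma_kernel_scale:
  assumes "\<sigma> > 0"
  shows "(\<integral>\<^sup>+t. inv_gamma_kernel n \<sigma> t \<partial>lborel) = (\<integral>\<^sup>+t. inv_gamma_kernel n 1 t \<partial>lborel)"
proof -
  have kernel_scale: "ennreal \<sigma> * inv_gamma_kernel n \<sigma> (\<sigma> * t) = inv_gamma_kernel n 1 t" for t
  proof (cases "t > 0")
    case True
    have "\<sigma> * ((\<sigma> / (\<sigma> * t)) ^ n * exp (- \<sigma> / (\<sigma> * t)) / (\<sigma> * t))
        = (1 / t) ^ n * exp (- 1 / t) / t"
      using assms True by (simp add: field_simps)
    then show ?thesis
      using True assms unfolding inv_gamma_kernel_def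
      by (simp add: ennreal_mult[symmetric] mult.assoc[symmetric])
  next
    case False
    then have "\<not> \<sigma> * t > 0"
      using assms by (simp add: zero_less_mult_iff)
    then show ?thesis
      using False unfolding inv_gamma_kernel_def by simp
  qed
  have "(\<integral>\<^sup>+t. inv_gamma_kernel n \<sigma> t \<partial>lborel)
      = ennreal \<bar>\<sigma>\<bar> * (\<integral>\<^sup>+t. inv_gamma_kernel n \<sigma> (0 + \<sigma> * t) \<partial>lborel)"
    using assms by (intro nn_integral_real_affine) auto
  also have "\<dots> = (\<integral>\<^sup>+t. ennreal \<sigma> * inv_gamma_kernel n \<sigma> (\<sigma> * t) \<partial>lborel)"
    using assms by (subst nn_integral_cmult) auto
  finally show ?thesis
    by (simp add: kernel_scale)
qed

lemma prob_simplex_nth_bounds: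
  assumes "v \<in> prob_simplex"
  shows "0 < v $ i" "v $ i \<le> 1"
proof -
  show "0 < v $ i"
    using assms by (simp add: prob_simplex_def)
  have "v $ i \<le> (\<Sum>i\<in>UNIV. v $ i)"
    using assms by (intro member_le_sum) (auto simp: prob_simplex_def less_imp_le)
  then show "v $ i \<le> 1"
    using assms by (simp add: prob_simplex_def)
qed

lemma mix_density_pos:
  assumes "g \<in> prob_simplex" "p \<in> prob_simplex" "l > 0"
  shows "mix_density l g p y > 0"
  unfolding mix_density_def comp_scale_def
  using assms prob_simplex_nth_bounds[OF assms(1)] prob_simplex_nth_bounds[OF assms(2)]
  by (intro sum_pos) auto

lemma weighted_exp_density_le:
  fixes c q y r :: real
  assumes "0 < c" "0 < q" "q \<le> 1" "0 < y" "y / c \<le> r"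
  shows "q / c * exp (- y / c) \<le> r / y * exp (- y / c)"
proof -
  have "q / c \<le> 1 / c"
    using assms by (simp add: divide_right_mono)
  also have "\<dots> = (y / c) / y"
    using assms by simp
  also have "\<dots> \<le> r / y"
    using assms by (intro divide_right_mono) auto
  finally show ?thesis
    by (rule mult_right_mono) simp
qed

text \<open>assignment_rate x n g p s / l is the total exponent \<Sum>_j x_j / \<lambda>_(s j) of the terms selected
  by the assignment s of observations to components.\<close>
definition assignment_rate :: "(nat \<Rightarrow> real) \<Rightarrow> nat \<Rightarrow> real^'k \<Rightarrow> real^'k \<Rightarrow> (nat \<Rightarrow> 'k) \<Rightarrow> real" where
  "assignment_rate x n g p s = (\<Sum>j<n. x j * (p $ s j / g $ s j))"

lemma assignment_rate_pos:
  assumes "g \<in> prob_simplex" "p \<in> prob_simplex" "\<forall>j<n. x j > 0" "n \<ge> 1"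
  shows "assignment_rate x n g p s > 0"
  unfolding assignment_rate_def
  using assms prob_simplex_nth_bounds[OF assms(1)] prob_simplex_nth_bounds[OF assms(2)]
  by (intro sum_pos) (auto simp: lessThan_empty_iff)

lemma comp_scale_rate:
  assumes "g \<in> prob_simplex" "p \<in> prob_simplex" "l > 0"
  shows "y / comp_scale l g p i = y * (p $ i / g $ i) / l"
  using assms prob_simplex_nth_bounds[OF assms(1)] prob_simplex_nth_bounds[OF assms(2)]
  unfolding comp_scale_def by (simp add: field_simps)

lemma prod_mix_density_div_le:
  fixes g p :: "real^'k"
  assumes g: "g \<in> prob_simplex" and p: "p \<in> prob_simplex" and l: "l > 0"
    and x: "\<forall>j<n. x j > 0"
  shows "(\<Prod>j<n. mix_density l g p (x j)) / l
    \<le> (\<Sum>s\<in>PiE {..<n} (\<lambda>_. UNIV).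
          1 / (\<Prod>j<n. x j) * ((assignment_rate x n g p s / l) ^ n * exp (- assignment_rate x n g p s / l) / l))"
proof -
  define T where "T j i = p $ i / comp_scale l g p i * exp (- x j / comp_scale l g p i)" for j i
  have "(\<Prod>j<n. mix_density l g p (x j)) = (\<Sum>s\<in>PiE {..<n} (\<lambda>_. UNIV). \<Prod>j<n. T j (s j))"
    unfolding mix_density_def T_def by (rule prod_sum_PiE) auto
  then have expand: "(\<Prod>j<n. mix_density l g p (x j)) / l
      = (\<Sum>s\<in>PiE {..<n} (\<lambda>_. UNIV). (\<Prod>j<n. T j (s j)) / l)"
    by (simp add: sum_divide_distrib)
  show ?thesis
    unfolding expand
  proof (rule sum_mono)
    fix s :: "nat \<Rightarrow> 'k"
    let ?\<sigma> = "assignment_rate x n g p s"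
    have rate: "x j / comp_scale l g p (s j) = x j * (p $ s j / g $ s j) / l" for j
      by (rule comp_scale_rate[OF g p l])
    have "x j * (p $ s j / g $ s j) \<le> ?\<sigma>" if "j < n" for j
      unfolding assignment_rate_def using that x prob_simplex_nth_bounds[OF g] prob_simplex_nth_bounds[OF p]
      by (intro member_le_sum) (auto intro!: mult_nonneg_nonneg divide_nonneg_nonneg less_imp_le)
    then have rate_le: "x j / comp_scale l g p (s j) \<le> ?\<sigma> / l" if "j < n" for j
      unfolding rate using that l by (intro divide_right_mono) auto
    have term_le: "T j (s j) \<le> (?\<sigma> / l) / x j * exp (- x j / comp_scale l g p (s j))"
      if "j < n" for j
      unfolding T_def using that l x rate_le prob_simplex_nth_bounds[OF g] prob_simplex_nth_bounds[OF p]
      by (intro weighted_exp_density_le) (auto simp: comp_scale_def)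
    have term_nonneg: "0 \<le> T j (s j)" for j
      unfolding T_def comp_scale_def using l prob_simplex_nth_bounds[OF g] prob_simplex_nth_bounds[OF p]
      by (intro mult_nonneg_nonneg divide_nonneg_nonneg) (auto intro: less_imp_le)
    have "(\<Prod>j<n. T j (s j))
        \<le> (\<Prod>j<n. (?\<sigma> / l) / x j * exp (- x j / comp_scale l g p (s j)))"
      using term_le term_nonneg by (intro prod_mono) auto
    also have "\<dots> = (\<Prod>j<n. (?\<sigma> / l) / x j) * exp (\<Sum>j<n. - x j / comp_scale l g p (s j))"
      by (simp only: prod.distrib exp_sum[OF finite_lessThan])
    also have "(\<Sum>j<n. - x j / comp_scale l g p (s j)) = - ?\<sigma> / l"
      by (simp add: rate assignment_rate_def sum_negf sum_divide_distrib)
    also have "(\<Prod>j<n. (?\<sigma> / l) / x j) = (?\<sigma> / l) ^ n / (\<Prod>j<n. x j)"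
      by (simp only: prod_dividef prod_constant card_lessThan) (simp add: power_divide)
    finally have "(\<Prod>j<n. T j (s j)) / l \<le> (?\<sigma> / l) ^ n / (\<Prod>j<n. x j) * exp (- ?\<sigma> / l) / l"
      using l by (intro divide_right_mono) auto
    then show "(\<Prod>j<n. T j (s j)) / l \<le> 1 / (\<Prod>j<n. x j) * ((?\<sigma> / l) ^ n * exp (- ?\<sigma> / l) / l)"
      by simp
  qed
qed

lemma likelihood_measurable [measurable]:
  "(\<lambda>l. ennreal ((\<Prod>j<n. mix_density l g p (x j)) / l)) \<in> borel_measurable borel"
  unfolding mix_density_def comp_scale_def by measurable

definition marginal_likelihood :: "(nat \<Rightarrow> real) \<Rightarrow> nat \<Rightarrow> real^'k \<Rightarrow> real^'k \<Rightarrow> ennreal" where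
  "marginal_likelihood x n g p =
     (\<integral>\<^sup>+ l\<in>{0<..}. ennreal ((\<Prod>j<n. mix_density l g p (x j)) / l) \<partial>lborel)"

lemma marginal_likelihood_pos:
  assumes g: "g \<in> prob_simplex" and p: "p \<in> prob_simplex"
  shows "0 < marginal_likelihood x n g p"
proof (rule ccontr)
  have integrand_pos: "ennreal ((\<Prod>j<n. mix_density l g p (x j)) / l) * indicator {0<..} l \<noteq> 0"
    if "0 < l" for l
  proof -
    have "0 < (\<Prod>j<n. mix_density l g p (x j)) / l"
      using mix_density_pos[OF g p that] that by (intro divide_pos_pos prod_pos) auto
    then show ?thesis
      using that mix_density_pos[OF g p that, THEN order_less_imp_not_eq2] by simp
  qed
  assume "\<not> 0 < marginal_likelihood x n g p"
  then have "marginal_likelihood x n g p = 0"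
    by (simp add: not_gr_zero)
  then have "AE l in lborel. ennreal ((\<Prod>j<n. mix_density l g p (x j)) / l) * indicator {0<..} l = 0"
    unfolding marginal_likelihood_def by (subst (asm) nn_integral_0_iff_AE) auto
  then have "AE l in lborel. l \<notin> {1..2::real}"
  proof eventually_elim
    case (elim l)
    show ?case
    proof
      assume "l \<in> {1..2}"
      then show False
        using elim integrand_pos[of l] by simp
    qed
  qed
  then have "emeasure lborel {1..2::real} = 0"
    by (subst (asm) AE_iff_measurable[of "{1..2}"]) auto
  then show False
    by simp
qed

lemma marginal_likelihood_bounded:
  assumes x: "\<forall>j<n. x j > 0" and n: "n \<ge> 1"
  shows "\<exists>C < \<infinity>. \<forall>g p :: real^'k. g \<in> prob_simplex \<longrightarrow> p \<in> prob_simplex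
           \<longrightarrow> marginal_likelihood x n g p \<le> C"
proof -
  define A where "A = PiE {..<n} (\<lambda>_. UNIV :: 'k set)"
  define c where "c = ennreal (1 / (\<Prod>j<n. x j))"
  define K where "K = (\<integral>\<^sup>+t. inv_gamma_kernel n 1 t \<partial>lborel)"
  have prod_x: "0 < (\<Prod>j<n. x j)"
    using x by (intro prod_pos) auto
  have "marginal_likelihood x n g p \<le> of_nat (card A) * (c * K)"
    if g: "g \<in> prob_simplex" and p: "p \<in> prob_simplex" for g p :: "real^'k"
  proof -
    let ?\<sigma> = "assignment_rate x n g p"
    have pointwise: "ennreal ((\<Prod>j<n. mix_density l g p (x j)) / l) * indicator {0<..} l
        \<le> (\<Sum>s\<in>A. c * inv_gamma_kernel n (?\<sigma> s) l)" for l
    proof (cases "l > 0")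
      case l: True
      have "ennreal ((\<Prod>j<n. mix_density l g p (x j)) / l)
          \<le> ennreal (\<Sum>s\<in>A. 1 / (\<Prod>j<n. x j) * ((?\<sigma> s / l) ^ n * exp (- ?\<sigma> s / l) / l))"
        unfolding A_def by (intro ennreal_leI prod_mix_density_div_le g p l x)
      also have "\<dots> = (\<Sum>s\<in>A. ennreal (1 / (\<Prod>j<n. x j) * ((?\<sigma> s / l) ^ n * exp (- ?\<sigma> s / l) / l)))"
        using l prod_x assignment_rate_pos[OF g p x n]
        by (intro sum_ennreal[symmetric]) (simp add: less_imp_le)
      also have "\<dots> = (\<Sum>s\<in>A. c * inv_gamma_kernel n (?\<sigma> s) l)"
        unfolding c_def inv_gamma_kernel_def using l prod_x assignment_rate_pos[OF g p x n]
        by (intro sum.cong refl) (simp add: ennreal_mult'[symmetric])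
      finally show ?thesis
        using l by simp
    qed simp
    have "marginal_likelihood x n g p \<le> (\<integral>\<^sup>+ l. (\<Sum>s\<in>A. c * inv_gamma_kernel n (?\<sigma> s) l) \<partial>lborel)"
      unfolding marginal_likelihood_def by (intro nn_integral_mono pointwise)
    also have "\<dots> = (\<Sum>s\<in>A. c * (\<integral>\<^sup>+ l. inv_gamma_kernel n (?\<sigma> s) l \<partial>lborel))"
      by (subst nn_integral_sum) (auto simp: nn_integral_cmult)
    also have "\<dots> = (\<Sum>s\<in>A. c * K)"
      unfolding K_def
      by (intro sum.cong refl) (simp only: nn_integral_inv_gamma_kernel_scale[OF assignment_rate_pos[OF g p x n]])
    also have "\<dots> = of_nat (card A) * (c * K)"
      by (rule sum_constant)
    finally show ?thesis .
  qed
  moreover have "of_nat (card A) * (c * K) < \<infinity>"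
    using nn_integral_inv_gamma_kernel_finite[OF n]
    by (simp add: K_def c_def ennreal_mult_less_top of_nat_less_top)
  ultimately show ?thesis
    by blast
qed

lemma vec_nth_borel_measurable [measurable]: "(\<lambda>v :: real^'n. v $ i) \<in> borel_measurable borel"
  by (intro borel_measurable_continuous_onI continuous_intros)

lemma marginal_likelihood_measurable:
  fixes M :: "((real^'k) \<times> (real^'k)) measure"
  assumes "sets M = sets borel"
  shows "(\<lambda>\<theta>. marginal_likelihood x n (fst \<theta>) (snd \<theta>)) \<in> borel_measurable M"
proof -
  have sets_eq: "sets (M \<Otimes>\<^sub>M lborel) = sets ((borel \<Otimes>\<^sub>M borel) \<Otimes>\<^sub>M lborel)"
    by (rule sets_pair_measure_cong) (simp_all only: assms borel_prod)
  have "(\<lambda>(\<theta> :: (real^'k) \<times> (real^'k), l :: real).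
      ennreal ((\<Prod>j<n. mix_density l (fst \<theta>) (snd \<theta>) (x j)) / l) * indicator {0<..} l)
      \<in> borel_measurable (M \<Otimes>\<^sub>M lborel)"
    unfolding measurable_cong_sets[OF sets_eq refl] mix_density_def comp_scale_def by measurable
  then show ?thesis
    unfolding marginal_likelihood_def by (rule lborel.borel_measurable_nn_integral)
qed

theorem theorem3:
  fixes \<pi>0 :: "((real^'k) \<times> (real^'k)) measure"
    and x :: "nat \<Rightarrow> real" and n :: nat
  assumes "prob_space \<pi>0"
    and "sets \<pi>0 = sets borel"
    and "AE \<theta> in \<pi>0. fst \<theta> \<in> prob_simplex \<and> snd \<theta> \<in> prob_simplex"
    and "n \<ge> 1"
    and "\<forall>j<n. x j > 0"
  shows "0 < (\<integral>\<^sup>+ \<theta>. (\<integral>\<^sup>+ l\<in>{0<..}.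
                 ennreal ((\<Prod>j<n. mix_density l (fst \<theta>) (snd \<theta>) (x j)) / l) \<partial>lborel) \<partial>\<pi>0)
    \<and> (\<integral>\<^sup>+ \<theta>. (\<integral>\<^sup>+ l\<in>{0<..}.
                 ennreal ((\<Prod>j<n. mix_density l (fst \<theta>) (snd \<theta>) (x j)) / l) \<partial>lborel) \<partial>\<pi>0) < \<infinity>"
proof -
  interpret prob_space \<pi>0 by fact
  define I where "I \<theta> = marginal_likelihood x n (fst \<theta>) (snd \<theta>)" for \<theta> :: "(real^'k) \<times> (real^'k)"
  obtain C where "C < \<infinity>" and bound: "\<And>g p :: real^'k. g \<in> prob_simplex \<Longrightarrow> p \<in> prob_simplex
      \<Longrightarrow> marginal_likelihood x n g p \<le> C"
    using marginal_likelihood_bounded[OF assms(5,4)] by blast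
  have "(\<integral>\<^sup>+\<theta>. I \<theta> \<partial>\<pi>0) \<le> (\<integral>\<^sup>+\<theta>. C \<partial>\<pi>0)"
    using assms(3) by (intro nn_integral_mono_AE) (auto simp: I_def bound)
  then have "(\<integral>\<^sup>+\<theta>. I \<theta> \<partial>\<pi>0) < \<infinity>"
    using \<open>C < \<infinity>\<close> by (simp add: emeasure_space_1)
  moreover have "(\<integral>\<^sup>+\<theta>. I \<theta> \<partial>\<pi>0) \<noteq> 0"
  proof
    assume "(\<integral>\<^sup>+\<theta>. I \<theta> \<partial>\<pi>0) = 0"
    then have "AE \<theta> in \<pi>0. I \<theta> = 0"
      using marginal_likelihood_measurable[OF assms(2)] by (simp add: I_def nn_integral_0_iff_AE)
    with assms(3) have "AE \<theta> in \<pi>0. False"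
      by eventually_elim (auto simp: I_def marginal_likelihood_pos[THEN order_less_imp_not_eq2])
    then show False
      by simp
  qed
  ultimately show ?thesis
    unfolding I_def marginal_likelihood_def zero_less_iff_neq_zero by blast
qed

end
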